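(* Let $\mathcal{C}$ be an exact-repair regenerating code with parameters $\{(n=d+1,k,d),(\alpha,\beta),B\}$, where $\alpha=(d-p+1)\beta-\theta$ with $p\in\{1,\dots,k\}$, $\theta\in[0,\beta)$ ($\theta=0$ if $p=k$), and let $\epsilon=\hat B-B$. Let $1\le i\le j\le k$, $L=[i\ j]$, and $$\mathcal{S}=\{S_{i+1}^{i}\}\cup S_{i+2}^{[i\ i+1]}\cup\cdots\cup S_{j}^{[i\ j-1]}\cup S_{[j+1\ d+1]}^{L},$$ i.e. $\mathcal{S}=\{S_x^y : y\in L,\ x\in[d+1],\ x>y\}$. Then $$H(\mathcal{S})\ \ge\ \sum_{\ell=i}^{j}\min\{\alpha,(d-\ell+1)\beta\}-\epsilon .$$
   Context: Setting: fix integers $1\le k\le d$, let $n=d+1$, a finite field $\mathbb{F}_q$, and reals $\alpha,\beta>0$. An exact-repair regenerating code with parameters $\{(n,k,d),(\alpha,\beta),B\}$: a file $M$ uniformly distributed over $\mathbb{F}_q^B$ (entropies are measured in units of $\log q$); node $i\in[n]$ stores $W_i$, a deterministic function of $M$, with $H(W_i)\le\alpha$; (data collection) for every $K\subseteq[n]$ with $|K|=k$, $M$ is a function of $(W_a)_{a\in K}$; (exact repair) since $n=d+1$, the helper set of node $y$ is $[n]\setminus\{y\}$: each $x\ne y$ sends helper data $S_x^y$, a deterministic function of $W_x$ with $H(S_x^y)\le\beta$, and $W_y$ is a function of $(S_x^y)_{x\neq y}$. Notation: $[i]=\{1,\dots,i\}$, $[i\ j]=\{i,i+1,\dots,j\}$;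 for $A\subseteq[n]$, $W_A=(W_a)_{a\in A}$; for $X,Y\subseteq[n]$, $S_X^Y=\{S_x^y: x\in X, y\in Y, x\ne y\}$; $S_x^Y=S_{\{x\}}^Y$. The functional-repair optimal file size is $\hat B=\sum_{i=1}^k\min\{\alpha,(d-i+1)\beta\}=p\alpha+\sum_{i=p+1}^k(d-i+1)\beta$, and $\epsilon:=\hat B-B$. *)

theory Defs
  imports Complex_Main
begin

text \<open>Message space: the file M is uniformly distributed over F_q^B, modelled as
  the set of lists of length B over a finite field 'f (q = card UNIV).\<close>

definition msgs :: "nat \<Rightarrow> 'f list set" where
  "msgs B = {xs. length xs = B}"

text \<open>Probability that the random variable X (a deterministic function of the
  uniformly distributed file) takes value a.\<close>

definition prb :: "'f::{field,finite} list set \<Rightarrow> ('f list \<Rightarrow> 'a) \<Rightarrow> 'a \<Rightarrow> real" where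
  "prb Ms X a = real (card {m \<in> Ms. X m = a}) / real (card Ms)"

definition ent :: "'f::{field,finite} list set \<Rightarrow> ('f list \<Rightarrow> 'a) \<Rightarrow> real" where
  "ent Ms X = - (\<Sum>a \<in> X ` Ms. prb Ms X a * log (real (card (UNIV :: 'f set))) (prb Ms X a))"

definition joint :: "'i set \<Rightarrow> ('i \<Rightarrow> 'm \<Rightarrow> 'a) \<Rightarrow> 'm \<Rightarrow> ('i \<Rightarrow> 'a)" where
  "joint I X = (\<lambda>m. \<lambda>i. if i \<in> I then X i m else undefined)"

text \<open>Exact-repair regenerating code with n = d+1 nodes labelled 1..d+1.
  W i: content of node i; S x y: helper data sent from node x to repair node y.\<close>

definition ER_code ::
  "nat \<Rightarrow> nat \<Rightarrow> real \<Rightarrow> real \<Rightarrow> nat \<Rightarrow>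
   (nat \<Rightarrow> 'f::{field,finite} list \<Rightarrow> 'w) \<Rightarrow> (nat \<Rightarrow> nat \<Rightarrow> 'f list \<Rightarrow> 's) \<Rightarrow> bool" where
  "ER_code k d \<alpha> \<beta> B W S \<longleftrightarrow>
     (let Ms = msgs B; N = {1..d+1} in
       (\<forall>i \<in> N. ent Ms (W i) \<le> \<alpha>) \<and>
       (\<forall>K \<subseteq> N. card K = k \<longrightarrow>
          (\<forall>m \<in> Ms. \<forall>m' \<in> Ms. (\<forall>a \<in> K. W a m = W a m') \<longrightarrow> m = m')) \<and>
       (\<forall>x \<in> N. \<forall>y \<in> N. x \<noteq> y \<longrightarrow>
          (\<forall>m \<in> Ms. \<forall>m' \<in> Ms. W x m = W x m' \<longrightarrow> S x y m = S x y m') \<and>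
          ent Ms (S x y) \<le> \<beta>) \<and>
       (\<forall>y \<in> N. \<forall>m \<in> Ms. \<forall>m' \<in> Ms.
          (\<forall>x \<in> N - {y}. S x y m = S x y m') \<longrightarrow> W y m = W y m'))"

text \<open>Functional-repair optimal file size.\<close>

definition Bhat :: "nat \<Rightarrow> nat \<Rightarrow> real \<Rightarrow> real \<Rightarrow> real" where
  "Bhat k d \<alpha> \<beta> = (\<Sum>i = 1..k. min \<alpha> ((real d - real i + 1) * \<beta>))"

end

theory Submission
  imports Defs
begin

text \<open>Let h l be the joint entropy of the first l nodes. Node l adds at most \<alpha> to it,
  and also at most (d-l+1)\<beta>, because together with nodes 1..l-1 the helper data sent to l
  by the nodes beyond l repairs it. Moreover nodes i..j are repaired one after the other
  from nodes 1..i-1 and the helper data in \<S>, so h j \<le> h (i-1) + H(\<S>). Data collection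
  gives B \<le> h k; chaining these bounds from 1 to k yields the claim.\<close>

section \<open>Entropy of functions of a uniformly distributed message\<close>

definition fiber_card :: "'m set \<Rightarrow> ('m \<Rightarrow> 'a) \<Rightarrow> 'm \<Rightarrow> nat" where
  "fiber_card Ms X m = card {m' \<in> Ms. X m' = X m}"

lemma fiber_card_ge_1: "finite Ms \<Longrightarrow> m \<in> Ms \<Longrightarrow> 1 \<le> fiber_card Ms X m"
  unfolding fiber_card_def using card_gt_0_iff[of "{m' \<in> Ms. X m' = X m}"] by auto

lemma card_field_ge_2: "2 \<le> card (UNIV :: 'f::{field,finite} set)"
proof -
  have "card {0::'f, 1} = 2" by simp
  moreover have "card {0::'f, 1} \<le> card (UNIV :: 'f set)" by (rule card_mono) auto
  ultimately show ?thesis by simp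
qed

lemma ent_eq_sum_ln_fiber_card:
  fixes Ms :: "'f::{field,finite} list set"
  assumes fin: "finite Ms" and ne: "Ms \<noteq> {}"
  shows "ent Ms X = (\<Sum>m\<in>Ms. ln (card Ms) - ln (fiber_card Ms X m))
                      / (card Ms * ln (card (UNIV :: 'f set)))"
proof -
  define q where "q = real (card (UNIV :: 'f set))"
  define N where "N = real (card Ms)"
  have q1: "q > 1" using card_field_ge_2[where 'f='f] unfolding q_def by simp
  have N0: "N > 0" using fin ne unfolding N_def by (simp add: card_gt_0_iff)
  define c where "c a = card {m\<in>Ms. X m = a}" for a
  have c_pos: "c a > 0" if "a \<in> X ` Ms" for a
    using that fin unfolding c_def by (auto simp: card_gt_0_iff)
  have "(\<Sum>m\<in>Ms. ln N - ln (fiber_card Ms X m)) = (\<Sum>m\<in>Ms. ln N - ln (c (X m)))"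
    unfolding fiber_card_def c_def by simp
  also have "\<dots> = (\<Sum>a\<in>X ` Ms. \<Sum>m\<in>{m\<in>Ms. X m = a}. ln N - ln (c (X m)))"
    by (rule sum.image_gen[OF fin])
  also have "\<dots> = (\<Sum>a\<in>X ` Ms. c a * (ln N - ln (c a)))"
    by (rule sum.cong) (auto simp: c_def)
  finally have by_value: "(\<Sum>m\<in>Ms. ln N - ln (fiber_card Ms X m))
                          = (\<Sum>a\<in>X ` Ms. c a * (ln N - ln (c a)))" .
  have "ent Ms X = (\<Sum>a\<in>X ` Ms. c a * (ln N - ln (c a)) / (N * ln q))"
    unfolding ent_def sum_negf[symmetric]
  proof (rule sum.cong)
    fix a assume a: "a \<in> X ` Ms"
    have prb: "prb Ms X a = c a / N" unfolding prb_def c_def N_def by simp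
    have ln: "ln (c a / N) = ln (c a) - ln N" using c_pos[OF a] N0 by (simp add: ln_div)
    show "- (prb Ms X a * log (real (card (UNIV :: 'f set))) (prb Ms X a))
          = c a * (ln N - ln (c a)) / (N * ln q)"
      unfolding prb log_def q_def[symmetric] ln using N0 q1
      by (simp add: field_simps right_diff_distrib)
  qed simp
  also have "\<dots> = (\<Sum>a\<in>X ` Ms. c a * (ln N - ln (c a))) / (N * ln q)"
    by (simp add: sum_divide_distrib)
  finally show ?thesis using by_value unfolding N_def q_def by simp
qed

lemma ent_le_if_determined:
  fixes Ms :: "'f::{field,finite} list set"
  assumes fin: "finite Ms" and ne: "Ms \<noteq> {}"
    and det: "\<And>m m'. m \<in> Ms \<Longrightarrow> m' \<in> Ms \<Longrightarrow> Y m = Y m' \<Longrightarrow> X m = X m'"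
  shows "ent Ms X \<le> ent Ms Y"
proof -
  have q: "ln (real (card (UNIV :: 'f set))) > 0" using card_field_ge_2[where 'f='f] by simp
  have N: "real (card Ms) > 0" using fin ne by (simp add: card_gt_0_iff)
  have "ln (fiber_card Ms Y m) \<le> ln (fiber_card Ms X m)" if "m \<in> Ms" for m
  proof -
    have "fiber_card Ms Y m \<le> fiber_card Ms X m"
      unfolding fiber_card_def by (rule card_mono) (use fin in simp, use that det in blast)
    then show ?thesis using fiber_card_ge_1[OF fin that, of Y] by simp
  qed
  then have "(\<Sum>m\<in>Ms. ln (card Ms) - ln (fiber_card Ms X m))
             \<le> (\<Sum>m\<in>Ms. ln (card Ms) - ln (fiber_card Ms Y m))"
    by (intro sum_mono) auto
  then show ?thesis unfolding ent_eq_sum_ln_fiber_card[OF fin ne]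
    by (intro divide_right_mono) (use q N in auto)
qed

text \<open>In probabilistic terms: the sum of p(x) p(y) over the support of the pair (X, Y) is at
  most 1. This is what makes the Gibbs-inequality argument for subadditivity work.\<close>

lemma sum_fiber_card_product_div_le:
  assumes fin: "finite Ms"
  shows "(\<Sum>m\<in>Ms. real (fiber_card Ms X m) * real (fiber_card Ms Y m)
                    / real (fiber_card Ms (\<lambda>m. (X m, Y m)) m))
         \<le> real (card Ms) * real (card Ms)"
proof -
  define cp where "cp m = real (fiber_card Ms (\<lambda>m. (X m, Y m)) m)" for m
  define ind where "ind m1 m2 m = (if X m = X m1 \<and> Y m = Y m2 then 1 else 0 :: real)" for m1 m2 m
  have card_as_sum: "real (fiber_card Ms Z m) = (\<Sum>m1\<in>Ms. if Z m = Z m1 then 1 else 0)"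
    for Z :: "_ \<Rightarrow> 'z" and m
    unfolding fiber_card_def using fin by (subst sum.inter_filter[symmetric]) (auto intro: arg_cong[where f=card])
  have product: "real (fiber_card Ms X m) * real (fiber_card Ms Y m) = (\<Sum>m1\<in>Ms. \<Sum>m2\<in>Ms. ind m1 m2 m)"
    for m unfolding card_as_sum sum_product ind_def by (intro sum.cong) auto
  have pair_fiber: "(\<Sum>m\<in>Ms. ind m1 m2 m / cp m) \<le> 1" for m1 m2
  proof -
    define C where "C = {m\<in>Ms. X m = X m1 \<and> Y m = Y m2}"
    have "(\<Sum>m\<in>Ms. ind m1 m2 m / cp m) = (\<Sum>m\<in>C. 1 / cp m)"
      unfolding C_def ind_def using fin by (auto simp: sum.inter_filter intro!: sum.cong)
    also have "\<dots> = (\<Sum>m\<in>C. 1 / real (card C))"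
    proof (rule sum.cong)
      fix m assume "m \<in> C"
      then have "{m'\<in>Ms. (X m', Y m') = (X m, Y m)} = C" unfolding C_def by auto
      then show "1 / cp m = 1 / real (card C)" unfolding cp_def fiber_card_def by simp
    qed simp
    also have "\<dots> \<le> 1" by (cases "card C = 0") auto
    finally show ?thesis .
  qed
  have "(\<Sum>m\<in>Ms. real (fiber_card Ms X m) * real (fiber_card Ms Y m) / cp m)
      = (\<Sum>m\<in>Ms. \<Sum>m1\<in>Ms. \<Sum>m2\<in>Ms. ind m1 m2 m / cp m)"
    unfolding product sum_divide_distrib by simp
  also have "\<dots> = (\<Sum>m1\<in>Ms. \<Sum>m2\<in>Ms. \<Sum>m\<in>Ms. ind m1 m2 m / cp m)"
    by (subst sum.swap) (rule sum.cong[OF refl], rule sum.swap)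
  also have "\<dots> \<le> (\<Sum>m1\<in>Ms. \<Sum>m2\<in>Ms. 1)"
    by (intro sum_mono pair_fiber)
  finally show ?thesis unfolding cp_def by simp
qed

lemma ent_pair_le:
  fixes Ms :: "'f::{field,finite} list set"
  assumes fin: "finite Ms" and ne: "Ms \<noteq> {}"
  shows "ent Ms (\<lambda>m. (X m, Y m)) \<le> ent Ms X + ent Ms Y"
proof -
  define L where "L = ln (real (card (UNIV :: 'f set)))"
  have L: "L > 0" using card_field_ge_2[where 'f='f] unfolding L_def by simp
  define N where "N = real (card Ms)"
  have N: "N > 0" using fin ne unfolding N_def by (simp add: card_gt_0_iff)
  define a where "a m = real (fiber_card Ms X m)" for m
  define b where "b m = real (fiber_card Ms Y m)" for m
  define c where "c m = real (fiber_card Ms (\<lambda>m. (X m, Y m)) m)" for m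
  have pos: "a m \<ge> 1" "b m \<ge> 1" "c m \<ge> 1" if "m \<in> Ms" for m
    using fiber_card_ge_1[OF fin that] unfolding a_def b_def c_def by auto
  have ln_bound: "ln (a m) + ln (b m) - ln N - ln (c m) \<le> a m * b m / c m / N - 1" if "m \<in> Ms" for m
  proof -
    have "ln (a m * b m / c m / N) = ln (a m) + ln (b m) - ln N - ln (c m)"
      using pos[OF that] N by (simp add: ln_div ln_mult)
    moreover have "a m * b m / c m / N > 0" using pos[OF that] N by simp
    ultimately show ?thesis using ln_le_minus_one by metis
  qed
  have "(\<Sum>m\<in>Ms. ln (a m) + ln (b m) - ln N - ln (c m)) \<le> (\<Sum>m\<in>Ms. a m * b m / c m / N - 1)"
    by (intro sum_mono ln_bound)
  also have "\<dots> = (\<Sum>m\<in>Ms. a m * b m / c m) / N - N"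
    by (simp add: sum_subtractf sum_divide_distrib N_def)
  also have "\<dots> \<le> 0"
    using sum_fiber_card_product_div_le[OF fin, of X Y] N
    unfolding a_def b_def c_def N_def[symmetric] by (simp add: divide_le_eq)
  finally have sums: "(\<Sum>m\<in>Ms. ln N - ln (c m))
                      \<le> (\<Sum>m\<in>Ms. ln N - ln (a m)) + (\<Sum>m\<in>Ms. ln N - ln (b m))"
    by (simp add: sum_subtractf sum.distrib N_def algebra_simps)
  have "ent Ms (\<lambda>m. (X m, Y m)) = (\<Sum>m\<in>Ms. ln N - ln (c m)) / (N * L)"
    unfolding ent_eq_sum_ln_fiber_card[OF fin ne] c_def N_def L_def ..
  also have "\<dots> \<le> ((\<Sum>m\<in>Ms. ln N - ln (a m)) + (\<Sum>m\<in>Ms. ln N - ln (b m))) / (N * L)"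
    by (intro divide_right_mono sums) (use N L in simp)
  also have "\<dots> = ent Ms X + ent Ms Y"
    unfolding ent_eq_sum_ln_fiber_card[OF fin ne] a_def b_def N_def L_def
    by (simp add: add_divide_distrib)
  finally show ?thesis .
qed

lemma ent_le_add_if_determined:
  fixes Ms :: "'f::{field,finite} list set"
  assumes fin: "finite Ms" and ne: "Ms \<noteq> {}"
    and det: "\<And>m m'. m \<in> Ms \<Longrightarrow> m' \<in> Ms \<Longrightarrow> Y m = Y m' \<Longrightarrow> Z m = Z m' \<Longrightarrow> X m = X m'"
  shows "ent Ms X \<le> ent Ms Y + ent Ms Z"
proof -
  have "ent Ms X \<le> ent Ms (\<lambda>m. (Y m, Z m))"
    by (rule ent_le_if_determined[OF fin ne]) (auto intro: det)
  also have "\<dots> \<le> ent Ms Y + ent Ms Z" by (rule ent_pair_le[OF fin ne])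
  finally show ?thesis .
qed

lemma ent_const:
  fixes Ms :: "'f::{field,finite} list set"
  assumes "finite Ms" and "Ms \<noteq> {}" and "\<And>m. X m = c"
  shows "ent Ms X = 0"
  using assms by (simp add: ent_eq_sum_ln_fiber_card fiber_card_def)

lemma joint_eq_iff: "joint I X m = joint I X m' \<longleftrightarrow> (\<forall>i\<in>I. X i m = X i m')"
  unfolding joint_def fun_eq_iff by (metis (full_types))

lemma ent_joint_le_sum:
  fixes Ms :: "'f::{field,finite} list set"
  assumes fin: "finite Ms" and ne: "Ms \<noteq> {}" and "finite I"
  shows "ent Ms (joint I X) \<le> (\<Sum>i\<in>I. ent Ms (X i))"
  using \<open>finite I\<close>
proof (induction I rule: finite_induct)
  case empty
  show ?case by (simp add: ent_const[OF fin ne] joint_def)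
next
  case (insert i I)
  have "ent Ms (joint (insert i I) X) \<le> ent Ms (X i) + ent Ms (joint I X)"
    by (rule ent_le_add_if_determined[OF fin ne]) (auto simp: joint_eq_iff)
  then show ?case using insert by simp
qed

lemma finite_msgs: "finite (msgs B :: 'f::finite list set)"
  using finite_lists_length_eq[of "UNIV :: 'f set" B] unfolding msgs_def by simp

lemma card_msgs: "card (msgs B :: 'f::finite list set) = card (UNIV :: 'f set) ^ B"
  using card_lists_length_eq[of "UNIV :: 'f set" B] unfolding msgs_def by simp

lemma msgs_nonempty: "msgs B \<noteq> {}"
  unfolding msgs_def by (metis (mono_tags) empty_iff length_replicate mem_Collect_eq)

lemma ent_msgs_id: "ent (msgs B) (\<lambda>m::'f::{field,finite} list. m) = real B"
proof -
  let ?Ms = "msgs B :: 'f list set"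
  have "fiber_card ?Ms (\<lambda>m. m) m = 1" if "m \<in> ?Ms" for m
  proof -
    have "{m' \<in> ?Ms. m' = m} = {m}" using that by auto
    then show ?thesis unfolding fiber_card_def by simp
  qed
  then have "(\<Sum>m\<in>?Ms. ln (card ?Ms) - ln (fiber_card ?Ms (\<lambda>m. m) m)) = card ?Ms * ln (card ?Ms)"
    by simp
  moreover have "card ?Ms > 0" using finite_msgs msgs_nonempty by (auto simp: card_gt_0_iff)
  moreover have "ln (real (card ?Ms)) = B * ln (card (UNIV :: 'f set))"
    unfolding card_msgs of_nat_power using card_field_ge_2[where 'f='f] by (simp add: ln_realpow)
  moreover have "ln (real (card (UNIV :: 'f set))) > 0" using card_field_ge_2[where 'f='f] by simp
  ultimately show ?thesis
    unfolding ent_eq_sum_ln_fiber_card[OF finite_msgs msgs_nonempty] by simp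
qed

section \<open>Prefix entropies of an exact-repair code with n = d + 1\<close>

locale er_code =
  fixes k d :: nat and \<alpha> \<beta> :: real and B :: nat
    and W :: "nat \<Rightarrow> 'f::{field,finite} list \<Rightarrow> 'w"
    and S :: "nat \<Rightarrow> nat \<Rightarrow> 'f list \<Rightarrow> 's"
  assumes code: "ER_code k d \<alpha> \<beta> B W S"
begin

abbreviation Ms :: "'f list set" where "Ms \<equiv> msgs B"

lemma node_ent_le: "l \<in> {1..d+1} \<Longrightarrow> ent Ms (W l) \<le> \<alpha>"
  using code unfolding ER_code_def Let_def by blast

lemma helper_ent_le: "x \<in> {1..d+1} \<Longrightarrow> y \<in> {1..d+1} \<Longrightarrow> x \<noteq> y \<Longrightarrow> ent Ms (S x y) \<le> \<beta>"
  using code unfolding ER_code_def Let_def by blast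

lemma helper_determined:
  "\<lbrakk>x \<in> {1..d+1}; y \<in> {1..d+1}; x \<noteq> y; m \<in> Ms; m' \<in> Ms; W x m = W x m'\<rbrakk>
   \<Longrightarrow> S x y m = S x y m'"
  using code unfolding ER_code_def Let_def by blast

lemma data_collection:
  "\<lbrakk>K \<subseteq> {1..d+1}; card K = k; m \<in> Ms; m' \<in> Ms; \<forall>a\<in>K. W a m = W a m'\<rbrakk> \<Longrightarrow> m = m'"
  using code unfolding ER_code_def Let_def by blast

lemma exact_repair:
  "\<lbrakk>y \<in> {1..d+1}; m \<in> Ms; m' \<in> Ms; \<forall>x\<in>{1..d+1} - {y}. S x y m = S x y m'\<rbrakk>
   \<Longrightarrow> W y m = W y m'"
  using code unfolding ER_code_def Let_def by blast

lemma node_determined_by_lower_nodes_and_upper_helpers: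
  assumes l: "l \<in> {1..d+1}" and m: "m \<in> Ms" "m' \<in> Ms"
    and lower: "\<And>x. 1 \<le> x \<Longrightarrow> x < l \<Longrightarrow> W x m = W x m'"
    and upper: "\<And>x. l < x \<Longrightarrow> x \<le> d+1 \<Longrightarrow> S x l m = S x l m'"
  shows "W l m = W l m'"
proof (rule exact_repair[OF l m], intro ballI)
  fix x assume x: "x \<in> {1..d+1} - {l}"
  show "S x l m = S x l m'"
  proof (cases "x < l")
    case True
    have "W x m = W x m'" using lower True x by simp
    then show ?thesis using helper_determined[of x l m m'] x l m by simp
  next
    case False
    then show ?thesis using upper x by simp
  qed
qed

definition prefix_ent :: "nat \<Rightarrow> real" where
  "prefix_ent l = ent Ms (joint {1..l} W)"

lemma prefix_ent_0: "prefix_ent 0 = 0"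
  unfolding prefix_ent_def by (rule ent_const[OF finite_msgs msgs_nonempty]) (simp add: joint_def)

lemma prefix_ent_le_add_if_determined:
  assumes "\<And>m m'. m \<in> Ms \<Longrightarrow> m' \<in> Ms \<Longrightarrow> (\<forall>x. 1 \<le> x \<longrightarrow> x < l \<longrightarrow> W x m = W x m')
             \<Longrightarrow> Z m = Z m' \<Longrightarrow> \<forall>x. l \<le> x \<longrightarrow> x \<le> j \<longrightarrow> W x m = W x m'"
  shows "prefix_ent j \<le> prefix_ent (l - 1) + ent Ms Z"
  unfolding prefix_ent_def
proof (rule ent_le_add_if_determined[OF finite_msgs msgs_nonempty])
  fix m m' assume m: "m \<in> Ms" "m' \<in> Ms" and "joint {1..l - 1} W m = joint {1..l - 1} W m'"
    and Z: "Z m = Z m'"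
  then have lower: "\<forall>x. 1 \<le> x \<longrightarrow> x < l \<longrightarrow> W x m = W x m'" by (auto simp: joint_eq_iff)
  show "joint {1..j} W m = joint {1..j} W m'"
    using lower assms[OF m lower Z] by (auto simp: joint_eq_iff not_less)
qed

lemma prefix_ent_step:
  assumes "1 \<le> l" and "l \<le> d"
  shows "prefix_ent l \<le> prefix_ent (l - 1) + min \<alpha> ((real d - real l + 1) * \<beta>)"
proof -
  have l: "l \<in> {1..d+1}" using assms by simp
  have "prefix_ent l \<le> prefix_ent (l - 1) + ent Ms (W l)"
    by (rule prefix_ent_le_add_if_determined) auto
  then have by_node: "prefix_ent l \<le> prefix_ent (l - 1) + \<alpha>"
    using node_ent_le[OF l] by linarith
  let ?helpers = "joint {l+1..d+1} (\<lambda>x. S x l)"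
  have "prefix_ent l \<le> prefix_ent (l - 1) + ent Ms ?helpers"
  proof (rule prefix_ent_le_add_if_determined, intro allI impI)
    fix m m' x assume m: "m \<in> Ms" "m' \<in> Ms" and "?helpers m = ?helpers m'"
      and "\<forall>x. 1 \<le> x \<longrightarrow> x < l \<longrightarrow> W x m = W x m'" and "l \<le> x" "x \<le> l"
    then show "W x m = W x m'"
      using node_determined_by_lower_nodes_and_upper_helpers[OF l m] by (auto simp: joint_eq_iff)
  qed
  also have "ent Ms ?helpers \<le> (\<Sum>x\<in>{l+1..d+1}. ent Ms (S x l))"
    by (rule ent_joint_le_sum[OF finite_msgs msgs_nonempty]) simp
  also have "\<dots> \<le> (\<Sum>x\<in>{l+1..d+1}. \<beta>)"
    by (intro sum_mono helper_ent_le) (use l in auto)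
  also have "\<dots> = (real d - real l + 1) * \<beta>" using assms by (simp add: of_nat_diff)
  finally show ?thesis using by_node by simp
qed

lemma prefix_ent_le_sum:
  assumes "a \<le> b" and "b \<le> d"
  shows "prefix_ent b \<le> prefix_ent a + (\<Sum>l = a+1..b. min \<alpha> ((real d - real l + 1) * \<beta>))"
  using assms
proof (induction b)
  case 0
  then show ?case by simp
next
  case (Suc b)
  show ?case
  proof (cases "a = Suc b")
    case False
    then have "a \<le> b" using Suc.prems by simp
    moreover have "prefix_ent (Suc b) \<le> prefix_ent b + min \<alpha> ((real d - real (Suc b) + 1) * \<beta>)"
      using prefix_ent_step[of "Suc b"] Suc.prems by simp
    moreover have "(\<Sum>l = a+1..Suc b. min \<alpha> ((real d - real l + 1) * \<beta>))
        = (\<Sum>l = a+1..b. min \<alpha> ((real d - real l + 1) * \<beta>)) + min \<alpha> ((real d - real (Suc b) + 1) * \<beta>)"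
      using \<open>a \<le> b\<close> by (subst sum.cl_ivl_Suc) simp
    ultimately show ?thesis
      using Suc.IH Suc.prems by linarith
  qed simp
qed

definition repair_block :: "nat \<Rightarrow> nat \<Rightarrow> (nat \<times> nat) set" where
  "repair_block i j = {(x, y). y \<in> {i..j} \<and> x \<in> {1..d+1} \<and> x > y}"

lemma prefix_ent_le_repair_block:
  assumes "1 \<le> i" and "j \<le> d"
  shows "prefix_ent j \<le> prefix_ent (i - 1) + ent Ms (joint (repair_block i j) (\<lambda>(x, y). S x y))"
proof (rule prefix_ent_le_add_if_determined)
  fix m m' assume m: "m \<in> Ms" "m' \<in> Ms"
    and lower: "\<forall>x. 1 \<le> x \<longrightarrow> x < i \<longrightarrow> W x m = W x m'"
    and "joint (repair_block i j) (\<lambda>(x, y). S x y) m = joint (repair_block i j) (\<lambda>(x, y). S x y) m'"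
  then have block: "S x y m = S x y m'" if "i \<le> y" "y \<le> j" "y < x" "x \<le> d+1" for x y
    using that by (auto simp: joint_eq_iff repair_block_def)
  have "\<forall>x. 1 \<le> x \<longrightarrow> x \<le> a \<longrightarrow> W x m = W x m'" if "a \<le> j" for a
    using that
  proof (induction a)
    case (Suc a)
    then have IH: "W x m = W x m'" if "1 \<le> x" "x < Suc a" for x
      using that by simp
    have "W (Suc a) m = W (Suc a) m'"
    proof (cases "Suc a < i")
      case False
      show ?thesis
      proof (rule node_determined_by_lower_nodes_and_upper_helpers[OF _ m IH])
        show "Suc a \<in> {1..d+1}" using Suc.prems assms by simp
        show "S x (Suc a) m = S x (Suc a) m'" if "Suc a < x" "x \<le> d+1" for x
          using block False Suc.prems that by simp
      qed
    qed (use lower in simp)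
    then show ?case using IH by (auto simp: le_Suc_eq)
  qed simp
  from this[OF order_refl] show "\<forall>x. i \<le> x \<longrightarrow> x \<le> j \<longrightarrow> W x m = W x m'"
    using assms by simp
qed

lemma file_size_le_prefix_ent:
  assumes "k \<le> d"
  shows "real B \<le> prefix_ent k"
proof -
  have "ent Ms (\<lambda>m. m) \<le> ent Ms (joint {1..k} W)"
  proof (rule ent_le_if_determined[OF finite_msgs msgs_nonempty])
    fix m m' assume "m \<in> Ms" "m' \<in> Ms" "joint {1..k} W m = joint {1..k} W m'"
    then show "m = m'"
      using data_collection[of "{1..k}"] assms by (simp add: joint_eq_iff)
  qed
  then show ?thesis unfolding prefix_ent_def ent_msgs_id .
qed

end

theorem proposition1:
  fixes k d p i j B :: nat and \<alpha> \<beta> \<theta> :: real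
    and W :: "nat \<Rightarrow> 'f::{field,finite} list \<Rightarrow> 'w"
    and S :: "nat \<Rightarrow> nat \<Rightarrow> 'f list \<Rightarrow> 's"
  assumes "1 \<le> k" and "k \<le> d"
    and "\<alpha> > 0" and "\<beta> > 0"
    and "ER_code k d \<alpha> \<beta> B W S"
    and "p \<in> {1..k}" and "0 \<le> \<theta>" and "\<theta> < \<beta>" and "p = k \<longrightarrow> \<theta> = 0"
    and "\<alpha> = (real d - real p + 1) * \<beta> - \<theta>"
    and "1 \<le> i" and "i \<le> j" and "j \<le> k"
  shows "ent (msgs B) (joint {(x, y). y \<in> {i..j} \<and> x \<in> {1..d+1} \<and> x > y} (\<lambda>(x, y). S x y))
         \<ge> (\<Sum>l = i..j. min \<alpha> ((real d - real l + 1) * \<beta>)) - (Bhat k d \<alpha> \<beta> - real B)"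
proof -
  interpret er_code k d \<alpha> \<beta> B W S by standard fact
  note kd = \<open>k \<le> d\<close> and ijk = \<open>1 \<le> i\<close> \<open>i \<le> j\<close> \<open>j \<le> k\<close>
  define c where "c l = min \<alpha> ((real d - real l + 1) * \<beta>)" for l
  define \<S> where "\<S> = joint (repair_block i j) (\<lambda>(x, y). S x y)"
  have "real B \<le> prefix_ent k" using file_size_le_prefix_ent kd .
  also have "\<dots> \<le> prefix_ent j + (\<Sum>l = j+1..k. c l)"
    using prefix_ent_le_sum[of j k] ijk kd unfolding c_def by simp
  also have "\<dots> \<le> prefix_ent (i - 1) + ent Ms \<S> + (\<Sum>l = j+1..k. c l)"
    using prefix_ent_le_repair_block ijk kd unfolding \<S>_def by simp
  also have "\<dots> \<le> (\<Sum>l = 1..i-1. c l) + ent Ms \<S> + (\<Sum>l = j+1..k. c l)"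
    using prefix_ent_le_sum[of 0 "i - 1"] prefix_ent_0 ijk kd unfolding c_def by simp
  finally have "real B \<le> (\<Sum>l = 1..i-1. c l) + ent Ms \<S> + (\<Sum>l = j+1..k. c l)" .
  moreover have "(\<Sum>l = 1..k. c l) = (\<Sum>l = 1..j. c l) + (\<Sum>l = j+1..k. c l)"
    using sum.ub_add_nat[of 1 j c "k - j"] ijk by simp
  moreover have "(\<Sum>l = 1..j. c l) = (\<Sum>l = 1..i-1. c l) + (\<Sum>l = i..j. c l)"
    using sum.ub_add_nat[of 1 "i - 1" c "j - (i - 1)"] ijk by simp
  ultimately have "ent Ms \<S> \<ge> (\<Sum>l = i..j. c l) - ((\<Sum>l = 1..k. c l) - real B)"
    by linarith
  then show ?thesis unfolding \<S>_def repair_block_def c_def Bhat_def .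
qed

end
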